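(* Under the standing setting and assumptions (A1)–(A3) described in the context, assume $\mathcal R(X)\neq\emptyset$ for all $X\in\mathcal X$ and that for any distinct $X,Y\in\partial\mathcal A$ with $X-Y\in\ker(\pi)$ there exists $\lambda\in(0,1)$ with $\lambda X+(1-\lambda)Y\in\mathrm{int}\,\mathcal A$. Then $|\mathcal R(X)|=1$ for all $X\in\mathcal X$.
   Context: Let $\mathcal X$ be a Hausdorff, first countable, locally convex topological vector space over $\mathbb R$, partially ordered by a partial order $\geq$ with positive cone $\mathcal X_+=\{X\in\mathcal X: X\geq 0\}$. Let $\mathcal M\subset\mathcal X$ be a vector subspace with $1<\dim\mathcal M<\infty$, carrying the relative topology, and let $\pi:\mathcal M\to\mathbb R$ be linear with $\ker(\pi)=\{Z\in\mathcal M:\pi(Z)=0\}$. Standing assumptions: (A1) there is $U\in\mathcal M\cap\mathcal X_+$ with $\pi(U)=1$; (A2) $\mathcal A\subsetneq\mathcal X$ is closed, contains $0$, and satisfies $\mathcal A+\mathcal X_+\subset\mathcal A$; (A3) the map $\rho(X)=\inf\{\pi(Z): Z\in\mathcal M,\ X+Z\in\mathcal A\}$ is finitely valued and continuous on $\mathcal X$. The optimal payoff map is $\mathcal R(X)=\{Z\in\mathcal M: X+Z\in\mathcal A,\ \pi(Z)=\rho(X)\}$; $|\cdot|$ is cardinality. $\partial$ and $\mathrm{int}$ denote boundary and interior in $\mathcal X$. *)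

theory Defs
  imports "HOL-Analysis.Analysis"
begin

definition tvs_ops_continuous :: "'a::{real_vector,topological_space} itself \<Rightarrow> bool" where
  "tvs_ops_continuous _ \<longleftrightarrow>
     continuous_on (UNIV :: ('a \<times> 'a) set) (\<lambda>(x, y). x + y) \<and>
     continuous_on (UNIV :: (real \<times> 'a) set) (\<lambda>(c, x). c *\<^sub>R x)"

definition locally_convex :: "'a::{real_vector,topological_space} itself \<Rightarrow> bool" where
  "locally_convex _ \<longleftrightarrow>
     (\<forall>W :: 'a set. open W \<and> 0 \<in> W \<longrightarrow> (\<exists>V. open V \<and> convex V \<and> 0 \<in> V \<and> V \<subseteq> W))"

definition linear_on_subspace :: "'a::real_vector set \<Rightarrow> ('a \<Rightarrow> real) \<Rightarrow> bool" where
  "linear_on_subspace M p \<longleftrightarrow>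
     (\<forall>x\<in>M. \<forall>y\<in>M. p (x + y) = p x + p y) \<and> (\<forall>c. \<forall>x\<in>M. p (c *\<^sub>R x) = c * p x)"

definition rho :: "'a::real_vector set \<Rightarrow> ('a \<Rightarrow> real) \<Rightarrow> 'a set \<Rightarrow> 'a \<Rightarrow> real" where
  "rho M p A X = Inf {p Z | Z. Z \<in> M \<and> X + Z \<in> A}"

definition optimal_payoffs :: "'a::real_vector set \<Rightarrow> ('a \<Rightarrow> real) \<Rightarrow> 'a set \<Rightarrow> 'a \<Rightarrow> 'a set" where
  "optimal_payoffs M p A X = {Z \<in> M. X + Z \<in> A \<and> p Z = rho M p A X}"

end

theory Submission
  imports Defs
begin

text \<open>An optimal payoff Z for X puts X + Z on the boundary of the acceptance set: if X + Z
  were interior, a small step in the direction -U of a payoff with price 1 would stay acceptable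
  and be strictly cheaper. Given two distinct optimal payoffs, both positions X + Z lie
  on the boundary and differ by a zero-price payoff, so by hypothesis some convex combination
  lies in the interior; that combination is again a payoff of price rho(X), contradicting the
  first observation.\<close>

lemma tvs_continuous_line:
  fixes V U :: "'a::{real_vector, topological_space}"
  assumes "tvs_ops_continuous TYPE('a)"
  shows "continuous_on UNIV (\<lambda>t::real. V + t *\<^sub>R U)"
proof -
  have add: "continuous_on (UNIV :: ('a \<times> 'a) set) (\<lambda>(x, y). x + y)"
   and scale: "continuous_on (UNIV :: (real \<times> 'a) set) (\<lambda>(c, x). c *\<^sub>R x)"
    using assms unfolding tvs_ops_continuous_def by auto
  have "continuous_on UNIV (\<lambda>t::real. (\<lambda>(c, x). c *\<^sub>R x) (t, U))"
    by (rule continuous_on_compose2[OF scale]) (auto intro!: continuous_intros)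
  then have "continuous_on UNIV (\<lambda>t::real. (V, t *\<^sub>R U))"
    by (auto intro!: continuous_intros)
  then show ?thesis
    by (rule continuous_on_compose2[OF add, where f = "\<lambda>t. (V, t *\<^sub>R U)", simplified])
qed

lemma linear_on_subspace_diff:
  assumes "linear_on_subspace M p" "subspace M" "x \<in> M" "y \<in> M"
  shows "p (x - y) = p x - p y"
proof -
  have "(-1) *\<^sub>R y \<in> M" using assms(2,4) by (rule subspace_scale)
  then have "p (x + (-1) *\<^sub>R y) = p x + (-1) * p y"
    using assms unfolding linear_on_subspace_def by metis
  then show ?thesis by simp
qed

lemma linear_on_subspace_convex_comb:
  assumes "linear_on_subspace M p" "subspace M" "x \<in> M" "y \<in> M"
  shows "p (l *\<^sub>R x + (1 - l) *\<^sub>R y) = l * p x + (1 - l) * p y"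
  using assms unfolding linear_on_subspace_def by (simp add: subspace_scale)

lemma rho_less_if_interior:
  fixes M :: "'a::{real_vector, topological_space} set"
  assumes tvs: "tvs_ops_continuous TYPE('a)"
    and M: "subspace M" and p: "linear_on_subspace M p"
    and U: "U \<in> M" "p U = 1"
    and bdd: "bdd_below {p Z | Z. Z \<in> M \<and> X + Z \<in> A}"
    and Z: "Z \<in> M" and int: "X + Z \<in> interior A"
  shows "rho M p A X < p Z"
proof -
  define f where "f = (\<lambda>t::real. (X + Z) + t *\<^sub>R U)"
  have "open (f -` interior A)"
    using continuous_on_open_vimage[OF open_UNIV] tvs_continuous_line[OF tvs] by (auto simp: f_def)
  moreover have "0 \<in> f -` interior A" using int by (simp add: f_def)
  ultimately obtain e where e: "e > 0" "ball 0 e \<subseteq> f -` interior A"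
    by (meson open_contains_ball)
  define Z' where "Z' = Z - (e/2) *\<^sub>R U"
  have "-(e/2) \<in> ball 0 e" using e by simp
  then have "X + Z' \<in> A"
    using e interior_subset by (fastforce simp: f_def Z'_def algebra_simps)
  moreover have "Z' \<in> M" using M Z U by (simp add: Z'_def subspace_diff subspace_scale)
  ultimately have "rho M p A X \<le> p Z'"
    unfolding rho_def using bdd by (intro cInf_lower) auto
  also have "p Z' = p Z - e/2"
    using linear_on_subspace_diff[OF p M Z] p M U unfolding Z'_def linear_on_subspace_def
    by (simp add: subspace_scale)
  finally show ?thesis using e by linarith
qed

lemma optimal_payoff_in_frontier:
  fixes M :: "'a::{real_vector, topological_space} set"
  assumes tvs: "tvs_ops_continuous TYPE('a)"
    and M: "subspace M" and p: "linear_on_subspace M p"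
    and U: "U \<in> M" "p U = 1"
    and bdd: "bdd_below {p Z | Z. Z \<in> M \<and> X + Z \<in> A}"
    and "closed A" and Z: "Z \<in> optimal_payoffs M p A X"
  shows "X + Z \<in> frontier A"
proof -
  have "X + Z \<notin> interior A"
    using rho_less_if_interior[OF tvs M p U bdd] Z unfolding optimal_payoffs_def by fastforce
  then show ?thesis
    using Z \<open>closed A\<close> unfolding optimal_payoffs_def frontier_def by (simp add: closure_closed)
qed

lemma optimal_payoffs_subsingleton:
  fixes M :: "'a::{real_vector, topological_space} set"
  assumes tvs: "tvs_ops_continuous TYPE('a)"
    and M: "subspace M" and p: "linear_on_subspace M p"
    and U: "U \<in> M" "p U = 1"
    and bdd: "bdd_below {p Z | Z. Z \<in> M \<and> X + Z \<in> A}"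
    and "closed A"
    and strict: "\<forall>X\<in>frontier A. \<forall>Y\<in>frontier A. X \<noteq> Y \<and> X - Y \<in> M \<and> p (X - Y) = 0 \<longrightarrow>
                   (\<exists>l. 0 < l \<and> l < 1 \<and> l *\<^sub>R X + (1 - l) *\<^sub>R Y \<in> interior A)"
    and Z1: "Z1 \<in> optimal_payoffs M p A X" and Z2: "Z2 \<in> optimal_payoffs M p A X"
  shows "Z1 = Z2"
proof (rule ccontr)
  assume "Z1 \<noteq> Z2"
  have opt: "Z1 \<in> M" "Z2 \<in> M" "p Z1 = rho M p A X" "p Z2 = rho M p A X"
    using Z1 Z2 unfolding optimal_payoffs_def by auto
  have "X + Z1 - (X + Z2) \<in> M" using opt M by (simp add: subspace_diff)
  moreover have "p (X + Z1 - (X + Z2)) = 0"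
    using linear_on_subspace_diff[OF p M opt(1,2)] opt by simp
  ultimately obtain l where l: "l *\<^sub>R (X + Z1) + (1 - l) *\<^sub>R (X + Z2) \<in> interior A"
    using strict \<open>Z1 \<noteq> Z2\<close> optimal_payoff_in_frontier[OF tvs M p U bdd \<open>closed A\<close>] Z1 Z2
    by (metis add_left_cancel)
  define W where "W = l *\<^sub>R Z1 + (1 - l) *\<^sub>R Z2"
  have "l *\<^sub>R (X + Z1) + (1 - l) *\<^sub>R (X + Z2) = X + W"
    by (simp add: W_def algebra_simps)
  with l have "X + W \<in> interior A" by simp
  moreover have "W \<in> M" using opt M by (simp add: W_def subspace_add subspace_scale)
  moreover have "p W = rho M p A X"
    using linear_on_subspace_convex_comb[OF p M opt(1,2)] opt by (simp add: W_def algebra_simps)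
  ultimately show False using rho_less_if_interior[OF tvs M p U bdd] by force
qed

theorem mainTheorem13:
  fixes Ord :: "('a::{real_vector, t2_space, first_countable_topology} \<times> 'a) set"
    and M :: "'a set" and p :: "'a \<Rightarrow> real" and A :: "'a set"
  assumes tvs: "tvs_ops_continuous TYPE('a)"
    and lc: "locally_convex TYPE('a)"
    and ord: "partial_order_on UNIV Ord"
    and M_sub: "subspace M"
    and M_fin: "\<exists>B. finite B \<and> independent B \<and> span B = M"
    and M_dim: "1 < dim M"
    and p_lin: "linear_on_subspace M p"
    and A1: "\<exists>U\<in>M. (0, U) \<in> Ord \<and> p U = 1"
    and A2: "A \<noteq> UNIV" "closed A" "0 \<in> A"
            "\<forall>X\<in>A. \<forall>Y. (0, Y) \<in> Ord \<longrightarrow> X + Y \<in> A"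
    and A3_fin: "\<forall>X. {p Z | Z. Z \<in> M \<and> X + Z \<in> A} \<noteq> {} \<and> bdd_below {p Z | Z. Z \<in> M \<and> X + Z \<in> A}"
    and A3_cont: "continuous_on UNIV (rho M p A)"
    and nonempty: "\<forall>X. optimal_payoffs M p A X \<noteq> {}"
    and strict: "\<forall>X\<in>frontier A. \<forall>Y\<in>frontier A. X \<noteq> Y \<and> X - Y \<in> M \<and> p (X - Y) = 0 \<longrightarrow>
                   (\<exists>l. 0 < l \<and> l < 1 \<and> l *\<^sub>R X + (1 - l) *\<^sub>R Y \<in> interior A)"
  shows "\<forall>X. card (optimal_payoffs M p A X) = 1"
proof
  fix X
  obtain U where U: "U \<in> M" "p U = 1" using A1 by blast
  have bdd: "bdd_below {p Z | Z. Z \<in> M \<and> X + Z \<in> A}" using spec[OF A3_fin, of X] by (elim conjE)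
  obtain Z where Z: "Z \<in> optimal_payoffs M p A X" using nonempty by blast
  have "optimal_payoffs M p A X = {Z}"
    using optimal_payoffs_subsingleton[OF tvs M_sub p_lin U bdd A2(2) strict _ Z] Z by blast
  then show "card (optimal_payoffs M p A X) = 1" by simp
qed

end
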